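(* For any $L\in\mathbb{N}$ there exists a ReLU network $\phi:\mathbb{R}^2\to\mathbb{R}$, $\phi\in\mathcal{NN}(8,2L)$, such that $\phi(x,l)=x_l$ whenever $x=\sum_{j=1}^Lx_j2^{-j}$ with $x_j\in\{0,1\}$ and $l\in\{1,2,\dots,L\}$. Furthermore, $|\phi(x,l)-\phi(x',l')|\le2\cdot2^{L^2}|x-x'|+L|l-l'|$ for all $x,x',l,l'\in\mathbb{R}$.
   Context: $\sigma(x)=\max(x,0)$. $\mathcal{NN}(W,L)$: functions $\phi(x)=T_L(\sigma(T_{L-1}(\cdots\sigma(T_0(x))\cdots)))$ with affine maps $T_l$, ReLU componentwise, all hidden layer sizes $\le W$ and depth $\le L$. *)

theory Defs
  imports Complex_Main
begin

text \<open>Vectors in R^n are represented as functions nat => real, only the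
coordinates i < n being relevant. An affine layer is a triple (m, A, b):
output dimension m, weight matrix A (entries A i j, i < m, j < n), bias b.\<close>

type_synonym layer = "nat \<times> (nat \<Rightarrow> nat \<Rightarrow> real) \<times> (nat \<Rightarrow> real)"

definition affine :: "nat \<Rightarrow> layer \<Rightarrow> (nat \<Rightarrow> real) \<Rightarrow> (nat \<Rightarrow> real)" where
  "affine n T x = (case T of (m, A, b) \<Rightarrow>
     (\<lambda>i. if i < m then (\<Sum>j<n. A i j * x j) + b i else 0))"

definition relu :: "real \<Rightarrow> real" where
  "relu t = max t 0"

fun realize :: "nat \<Rightarrow> layer list \<Rightarrow> (nat \<Rightarrow> real) \<Rightarrow> (nat \<Rightarrow> real)" where
  "realize n [] x = x"
| "realize n [T] x = affine n T x"
| "realize n (T # T' # Ts) x = realize (fst T) (T' # Ts) (\<lambda>i. relu (affine n T x i))"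

text \<open>NN d_in d_out W L: functions R^{d_in} -> R^{d_out} realized by ReLU networks
 with affine maps T_0,...,T_k, k <= L (depth <= L), all hidden layer sizes <= W.\<close>
definition NN :: "nat \<Rightarrow> nat \<Rightarrow> nat \<Rightarrow> nat \<Rightarrow> ((nat \<Rightarrow> real) \<Rightarrow> (nat \<Rightarrow> real)) set" where
  "NN d_in d_out W L = {\<phi>. \<exists>Ts. Ts \<noteq> [] \<and> length Ts \<le> L + 1
      \<and> (\<forall>T\<in>set (butlast Ts). fst T \<le> W) \<and> fst (last Ts) = d_out
      \<and> \<phi> = realize d_in Ts}"

definition vec2 :: "real \<Rightarrow> real \<Rightarrow> (nat \<Rightarrow> real)" where
  "vec2 a c = (\<lambda>i. if i = 0 then a else if i = 1 then c else 0)"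

end

theory Submission
  imports Defs
begin

(* The network reads one binary digit per pair of hidden layers. After j stages its state is
  (r_j, l, a, a') with remainder r_j = sum_{i>j} x_i 2^-i and a + a' = x_l if l <= j, else 0.
  As 0 <= r_{j+1} <= 2^-(j+1) - 2^-L, the digit x_{j+1} is recovered exactly from r_j by a
  ramp of slope 2^L rising from 0 to 1 on [2^-(j+1) - 2^-L, 2^-(j+1)], and a hat function of
  l - j, which is 1 at l = j+1 and 0 at all other integers, decides whether it enters a + a'.
  For the Lipschitz bound, each stage multiplies the sensitivity of the remainder to x by at
  most 2^L and adds at most 2^(L(j+1)) |x - x'| + |l - l'| to that of a + a'; summing the
  geometric series gives 2 * 2^(L^2) |x - x'| + L |l - l'|. *)

lemma relu_lipschitz: "\<bar>relu a - relu b\<bar> \<le> \<bar>a - b\<bar>"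
  by (simp add: relu_def max_def abs_if)

definition ramp :: "real \<Rightarrow> real" where
  "ramp t = relu (t + 1) - relu t"

definition hat :: "real \<Rightarrow> real" where
  "hat t = relu t - 2 * relu (t - 1) + relu (t - 2)"

lemma ramp_lipschitz: "\<bar>ramp a - ramp b\<bar> \<le> \<bar>a - b\<bar>"
  by (simp add: ramp_def relu_def max_def abs_if)

lemma hat_lipschitz: "\<bar>hat a - hat b\<bar> \<le> \<bar>a - b\<bar>"
  by (simp add: hat_def relu_def max_def abs_if)

lemma ramp_nonneg_eq_1: "0 \<le> t \<Longrightarrow> ramp t = 1"
  by (simp add: ramp_def relu_def)

lemma ramp_le_neg_1_eq_0: "t \<le> -1 \<Longrightarrow> ramp t = 0"
  by (simp add: ramp_def relu_def)

lemma hat_of_nat_diff: "hat (real l - real j) = (if l = Suc j then 1 else 0)"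
proof -
  consider "l \<le> j" | "l = Suc j" | "Suc (Suc j) \<le> l" by linarith
  then show ?thesis
    by cases (auto simp: hat_def relu_def)
qed

definition leading_digit :: "nat \<Rightarrow> nat \<Rightarrow> real \<Rightarrow> real" where
  "leading_digit L j r = ramp (2^L * (r - (1/2) ^ Suc j))"

lemma leading_digit_lipschitz: "\<bar>leading_digit L j a - leading_digit L j b\<bar> \<le> 2^L * \<bar>a - b\<bar>"
proof -
  have "\<bar>leading_digit L j a - leading_digit L j b\<bar>
      \<le> \<bar>2^L * (a - (1/2) ^ Suc j) - 2^L * (b - (1/2) ^ Suc j)\<bar>"
    unfolding leading_digit_def by (rule ramp_lipschitz)
  also have "\<dots> = 2^L * \<bar>a - b\<bar>"
    by (simp add: abs_mult right_diff_distrib[symmetric])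
  finally show ?thesis .
qed

lemma leading_digit_eq:
  assumes b: "b \<in> {0, 1}" and r: "0 \<le> r" "r \<le> (1/2) ^ Suc j - (1/2) ^ L"
  shows "leading_digit L j (b * (1/2) ^ Suc j + r) = b"
proof (cases "b = 1")
  case True
  then show ?thesis using r by (simp add: leading_digit_def ramp_nonneg_eq_1)
next
  case False
  then have "b = 0" using b by simp
  have "2^L * (r - (1/2) ^ Suc j) \<le> 2^L * - ((1/2) ^ L :: real)"
    using r by (intro mult_left_mono) auto
  also have "\<dots> = -1" by (simp add: power_divide)
  finally show ?thesis using \<open>b = 0\<close> by (simp add: leading_digit_def ramp_le_neg_1_eq_0)
qed

definition binary_tail :: "(nat \<Rightarrow> real) \<Rightarrow> nat \<Rightarrow> nat \<Rightarrow> real" where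
  "binary_tail xs L j = (\<Sum>i = Suc j..L. xs i * (1/2) ^ i)"

lemma binary_tail_Suc:
  "j < L \<Longrightarrow> binary_tail xs L j = xs (Suc j) * (1/2) ^ Suc j + binary_tail xs L (Suc j)"
  unfolding binary_tail_def by (simp add: sum.atLeast_Suc_atMost)

lemma binary_tail_bounds:
  assumes bits: "\<forall>i\<in>{1..L}. xs i \<in> {0, 1}" and "j \<le> L"
  shows "0 \<le> binary_tail xs L j" "binary_tail xs L j \<le> (1/2) ^ j - (1/2) ^ L"
proof -
  have xs: "xs i \<in> {0, 1}" if "i \<in> {Suc j..L}" for i using bits that by auto
  show "0 \<le> binary_tail xs L j"
    unfolding binary_tail_def by (rule sum_nonneg) (use xs in fastforce)
  have "binary_tail xs L j \<le> (\<Sum>i = Suc j..L. (1/2) ^ i)"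
    unfolding binary_tail_def by (rule sum_mono) (use xs in fastforce)
  also have "\<dots> = (1/2) ^ j - (1/2) ^ L"
  proof (cases "j = L")
    case False
    then have "(1 - 1/2) * (\<Sum>i = Suc j..L. (1/2::real) ^ i) = (1/2) ^ Suc j - (1/2) ^ Suc L"
      using \<open>j \<le> L\<close> by (intro sum_gp_multiplied) simp
    then show ?thesis by simp
  qed simp
  finally show "binary_tail xs L j \<le> (1/2) ^ j - (1/2) ^ L" .
qed

lemma sum_power_le_twice_last:
  fixes q :: real
  assumes "2 \<le> q"
  shows "(\<Sum>i = 1..k. q ^ i) \<le> 2 * q ^ k"
proof (induction k)
  case (Suc k)
  have "2 * q ^ k \<le> q * q ^ k" using assms by (intro mult_right_mono) auto
  then show ?case using Suc by (simp add: sum.cl_ivl_Suc)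
qed simp

lemma sum_power_two_power_le: "(\<Sum>i = 1..L. ((2::real)^L)^i) \<le> 2 * 2^(L^2)"
proof (cases "L = 0")
  case False
  then have "(\<Sum>i = 1..L. ((2::real)^L)^i) \<le> 2 * (2^L)^L"
    using self_le_power[of 2 L] by (intro sum_power_le_twice_last) simp
  then show ?thesis by (simp add: power_mult power2_eq_square)
qed simp

text \<open>Out-of-range list entries are never read by \<^const>\<open>affine\<close>.\<close>

definition layer_of :: "real list list \<Rightarrow> real list \<Rightarrow> layer" where
  "layer_of rows bias = (length rows, \<lambda>i k. rows ! i ! k, \<lambda>i. bias ! i)"

lemma affine_layer_of:
  "i < length rows \<Longrightarrow>
    affine n (layer_of rows bias) x i = (\<Sum>k<n. rows ! i ! k * x k) + bias ! i"
  by (simp add: affine_def layer_of_def)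

definition digit_layer :: "nat \<Rightarrow> nat \<Rightarrow> layer" where
  "digit_layer L j = (let c = (1/2) ^ Suc j in layer_of
     [[1,   0, 0, 0],
      [2^L, 0, 0, 0],
      [2^L, 0, 0, 0],
      [0,   1, 0, 0],
      [0,   1, 0, 0],
      [0,   1, 0, 0],
      [0,   1, 0, 0],
      [0,   0, 1, 1]]
     [0, 1 - 2^L * c, - (2^L * c), - real j, - real j - 1, - real j - 2, 0, 0])"

definition combine_layer :: "nat \<Rightarrow> layer" where
  "combine_layer j = (let c = (1/2) ^ Suc j in layer_of
     [[1, - c, c, 0,  0, 0, 0, 0],
      [0,  0,  0, 0,  0, 0, 1, 0],
      [0,  0,  0, 0,  0, 0, 0, 1],
      [0,  1, -1, 1, -2, 1, 0, 0]]
     [0, 0, 0, -1])"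

definition readout_layer :: layer where
  "readout_layer = layer_of [[0, 0, 1, 1]] [0]"

text \<open>The state is (remainder, digit index, readout, readout): the readout is split over
  two units because the digit found in a stage is added to it only in the next one.\<close>

definition stage :: "nat \<Rightarrow> nat \<Rightarrow> (nat \<Rightarrow> real) \<Rightarrow> (nat \<Rightarrow> real)" where
  "stage L j s =
    (\<lambda>i. relu (affine 8 (combine_layer j) (\<lambda>k. relu (affine 4 (digit_layer L j) s k)) i))"

definition readout :: "(nat \<Rightarrow> real) \<Rightarrow> real" where
  "readout s = s 2 + s 3"

lemma stage_0: "stage L j s 0 = relu (relu (s 0) - (1/2) ^ Suc j * leading_digit L j (s 0))"
  by (simp add: stage_def affine_layer_of digit_layer_def combine_layer_def leading_digit_def
      ramp_def numeral_eq_Suc Let_def algebra_simps)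

lemma stage_1: "stage L j s 1 = relu (s 1)"
  by (simp add: stage_def affine_layer_of digit_layer_def combine_layer_def relu_def
      numeral_eq_Suc Let_def)

lemma stage_2: "stage L j s 2 = relu (readout s)"
  by (simp add: stage_def affine_layer_of digit_layer_def combine_layer_def readout_def relu_def
      numeral_eq_Suc Let_def)

lemma stage_3: "stage L j s 3 = relu (leading_digit L j (s 0) + hat (s 1 - real j) - 1)"
  by (simp add: stage_def affine_layer_of digit_layer_def combine_layer_def leading_digit_def
      ramp_def hat_def numeral_eq_Suc Let_def algebra_simps)

lemma affine_readout_layer: "affine 4 readout_layer s 0 = readout s"
  by (simp add: readout_layer_def affine_layer_of readout_def numeral_eq_Suc)

lemma stage_extracts_digit:
  assumes bits: "\<forall>i\<in>{1..L}. xs i \<in> {0, 1}" and l: "l \<in> {1..L}" and "j < L"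
    and s0: "s 0 = binary_tail xs L j" and s1: "s 1 = real l"
    and acc: "readout s = (if l \<le> j then xs l else 0)"
  shows "stage L j s 0 = binary_tail xs L (Suc j)" "stage L j s 1 = real l"
    "readout (stage L j s) = (if l \<le> Suc j then xs l else 0)"
proof -
  define b r where "b = xs (Suc j)" and "r = binary_tail xs L (Suc j)"
  have b01: "b \<in> {0, 1}" and xl: "xs l \<in> {0, 1}" using bits l \<open>j < L\<close> by (auto simp: b_def)
  have r: "0 \<le> r" "r \<le> (1/2) ^ Suc j - (1/2) ^ L"
    using binary_tail_bounds[OF bits, of "Suc j"] \<open>j < L\<close> by (auto simp: r_def)
  have s0_split: "s 0 = b * (1/2) ^ Suc j + r"
    using s0 binary_tail_Suc[OF \<open>j < L\<close>] by (simp add: b_def r_def)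
  have digit: "leading_digit L j (s 0) = b"
    unfolding s0_split using leading_digit_eq[OF b01 r] .
  show "stage L j s 0 = binary_tail xs L (Suc j)"
    unfolding stage_0 digit unfolding s0_split using b01 r by (auto simp: r_def relu_def)
  show "stage L j s 1 = real l"
    unfolding stage_1 s1 by (simp add: relu_def)
  have "stage L j s 2 = (if l \<le> j then xs l else 0)"
    using xl by (auto simp: stage_2 acc relu_def)
  moreover have "stage L j s 3 = (if l = Suc j then b else 0)"
    unfolding stage_3 digit s1 hat_of_nat_diff using b01 by (auto simp: relu_def)
  ultimately show "readout (stage L j s) = (if l \<le> Suc j then xs l else 0)"
    by (auto simp: readout_def b_def)
qed

lemma stage_remainder_lipschitz:
  assumes "0 < L"
  shows "\<bar>stage L j s 0 - stage L j t 0\<bar> \<le> 2^L * \<bar>s 0 - t 0\<bar>"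
proof -
  define c :: real where "c = (1/2) ^ Suc j"
  define D where "D = \<bar>s 0 - t 0\<bar>"
  define d where "d = leading_digit L j (s 0) - leading_digit L j (t 0)"
  have d: "\<bar>d\<bar> \<le> 2^L * D" unfolding d_def D_def by (rule leading_digit_lipschitz)
  have c: "0 < c" "c \<le> 1/2" unfolding c_def by (auto simp: power_le_one)
  have "\<bar>stage L j s 0 - stage L j t 0\<bar>
      \<le> \<bar>(relu (s 0) - c * leading_digit L j (s 0))
           - (relu (t 0) - c * leading_digit L j (t 0))\<bar>"
    unfolding stage_0 c_def by (rule relu_lipschitz)
  also have "\<dots> = \<bar>(relu (s 0) - relu (t 0)) - c * d\<bar>"
    by (simp add: d_def algebra_simps)
  also have "\<dots> \<le> D + c * (2^L * D)"
    using relu_lipschitz[of "s 0" "t 0"] d c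
    by (auto simp: D_def abs_mult intro!: order.trans[OF abs_triangle_ineq4] add_mono mult_left_mono)
  also have "\<dots> \<le> 2^L * D"
  proof -
    have "c * (2^L * D) \<le> 1/2 * (2^L * D)" using c by (intro mult_right_mono) (auto simp: D_def)
    moreover have "2 * D \<le> 2^L * D"
      using self_le_power[of 2 L] assms by (intro mult_right_mono) (auto simp: D_def)
    ultimately show ?thesis by linarith
  qed
  finally show ?thesis by (simp add: D_def)
qed

lemma stage_readout_lipschitz:
  "\<bar>readout (stage L j s) - readout (stage L j t)\<bar>
     \<le> \<bar>readout s - readout t\<bar> + 2^L * \<bar>s 0 - t 0\<bar> + \<bar>s 1 - t 1\<bar>"
proof -
  define d where "d = leading_digit L j (s 0) - leading_digit L j (t 0)"
  have "\<bar>stage L j s 3 - stage L j t 3\<bar>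
      \<le> \<bar>(leading_digit L j (s 0) + hat (s 1 - real j) - 1)
           - (leading_digit L j (t 0) + hat (t 1 - real j) - 1)\<bar>"
    unfolding stage_3 by (rule relu_lipschitz)
  also have "\<dots> = \<bar>d + (hat (s 1 - real j) - hat (t 1 - real j))\<bar>"
    by (simp add: d_def algebra_simps)
  also have "\<dots> \<le> 2^L * \<bar>s 0 - t 0\<bar> + \<bar>s 1 - t 1\<bar>"
    using abs_triangle_ineq[of d "hat (s 1 - real j) - hat (t 1 - real j)"]
      leading_digit_lipschitz[of L j "s 0" "t 0"] hat_lipschitz[of "s 1 - real j" "t 1 - real j"]
    by (simp add: d_def)
  finally have "\<bar>stage L j s 3 - stage L j t 3\<bar> \<le> 2^L * \<bar>s 0 - t 0\<bar> + \<bar>s 1 - t 1\<bar>" .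
  moreover have "\<bar>stage L j s 2 - stage L j t 2\<bar> \<le> \<bar>readout s - readout t\<bar>"
    unfolding stage_2 by (rule relu_lipschitz)
  ultimately show ?thesis
    unfolding readout_def[of "stage L j s"] readout_def[of "stage L j t"] by linarith
qed

lemma vec2_simps [simp]: "vec2 a b 0 = a" "vec2 a b (Suc 0) = b" "readout (vec2 a b) = 0"
  by (simp_all add: vec2_def readout_def)

lemma stages_extract_digits:
  assumes bits: "\<forall>i\<in>{1..L}. xs i \<in> {0, 1}" and l: "l \<in> {1..L}" and "k \<le> L"
  defines "s \<equiv> fold (stage L) [0..<k] (vec2 (binary_tail xs L 0) (real l))"
  shows "s 0 = binary_tail xs L k \<and> s 1 = real l \<and> readout s = (if l \<le> k then xs l else 0)"
  using \<open>k \<le> L\<close> unfolding s_def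
proof (induction k)
  case 0
  then show ?case using l by simp
next
  case (Suc k)
  then have "k < L" by simp
  with Suc stage_extracts_digit[OF bits l] show ?case by simp
qed

lemma stages_lipschitz:
  fixes s t :: "nat \<Rightarrow> real"
  assumes "k \<le> L"
  defines "u \<equiv> fold (stage L) [0..<k] s" and "v \<equiv> fold (stage L) [0..<k] t"
  shows "\<bar>u 0 - v 0\<bar> \<le> (2^L)^k * \<bar>s 0 - t 0\<bar> \<and> \<bar>u 1 - v 1\<bar> \<le> \<bar>s 1 - t 1\<bar> \<and>
    \<bar>readout u - readout v\<bar> \<le> \<bar>readout s - readout t\<bar>
      + (\<Sum>i = 1..k. (2^L)^i) * \<bar>s 0 - t 0\<bar> + real k * \<bar>s 1 - t 1\<bar>"
  using assms(1) unfolding u_def v_def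
proof (induction k)
  case (Suc k)
  let ?u = "fold (stage L) [0..<k] s" and ?v = "fold (stage L) [0..<k] t"
  have "0 < L" using Suc.prems by simp
  have IH: "\<bar>?u 0 - ?v 0\<bar> \<le> (2^L)^k * \<bar>s 0 - t 0\<bar>" "\<bar>?u 1 - ?v 1\<bar> \<le> \<bar>s 1 - t 1\<bar>"
    "\<bar>readout ?u - readout ?v\<bar> \<le> \<bar>readout s - readout t\<bar>
      + (\<Sum>i = 1..k. (2^L)^i) * \<bar>s 0 - t 0\<bar> + real k * \<bar>s 1 - t 1\<bar>"
    using Suc by simp_all
  have sum_Suc: "(\<Sum>i = 1..Suc k. (2^L)^i) = (\<Sum>i = 1..k. (2^L)^i) + ((2::real)^L)^Suc k"
    by simp
  have growth: "2^L * \<bar>?u 0 - ?v 0\<bar> \<le> (2^L)^Suc k * \<bar>s 0 - t 0\<bar>"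
    using mult_left_mono[OF IH(1), of "2^L"] by simp
  have "\<bar>stage L k ?u 0 - stage L k ?v 0\<bar> \<le> (2^L)^Suc k * \<bar>s 0 - t 0\<bar>"
    using stage_remainder_lipschitz[OF \<open>0 < L\<close>, of k ?u ?v] growth by linarith
  moreover have "\<bar>stage L k ?u 1 - stage L k ?v 1\<bar> \<le> \<bar>s 1 - t 1\<bar>"
    using relu_lipschitz[of "?u 1" "?v 1"] IH(2) unfolding stage_1 by linarith
  moreover have "\<bar>readout (stage L k ?u) - readout (stage L k ?v)\<bar>
      \<le> \<bar>readout s - readout t\<bar> + (\<Sum>i = 1..Suc k. (2^L)^i) * \<bar>s 0 - t 0\<bar>
         + real (Suc k) * \<bar>s 1 - t 1\<bar>"
    using stage_readout_lipschitz[of L k ?u ?v] IH(2,3) growth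
    unfolding sum_Suc of_nat_Suc distrib_right by linarith
  ultimately show ?case by simp
qed simp

definition stage_layers :: "nat \<Rightarrow> nat list \<Rightarrow> layer list" where
  "stage_layers L js = concat (map (\<lambda>j. [digit_layer L j, combine_layer j]) js)"

definition bit_network :: "nat \<Rightarrow> layer list" where
  "bit_network L = stage_layers L [0..<L] @ [readout_layer]"

lemma fst_layers [simp]:
  "fst (digit_layer L j) = 8" "fst (combine_layer j) = 4" "fst readout_layer = 1"
  by (simp_all add: digit_layer_def combine_layer_def readout_layer_def layer_of_def Let_def)

lemma realize_Cons:
  "Ts \<noteq> [] \<Longrightarrow> realize n (T # Ts) x = realize (fst T) Ts (\<lambda>i. relu (affine n T x i))"
  by (cases Ts) auto

lemma realize_stage_layers:
  "realize 4 (stage_layers L js @ [readout_layer]) s = affine 4 readout_layer (fold (stage L) js s)"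
proof (induction js arbitrary: s)
  case (Cons j js)
  have "realize 4 (stage_layers L (j # js) @ [readout_layer]) s
      = realize 4 (stage_layers L js @ [readout_layer]) (stage L j s)"
    by (simp add: stage_layers_def realize_Cons stage_def)
  with Cons show ?case by simp
qed (simp add: stage_layers_def)

lemma affine_vec2: "2 \<le> n \<Longrightarrow> affine n T (vec2 a b) = affine 2 T (vec2 a b)"
proof -
  assume "2 \<le> n"
  then have sums: "(\<Sum>k<n. f k * vec2 a b k) = (\<Sum>k<2. f k * vec2 a b k)" for f
    by (intro sum.mono_neutral_right) (auto simp: vec2_def)
  show ?thesis unfolding affine_def by (simp only: sums)
qed

lemma realize_bit_network:
  "realize 2 (bit_network L) (vec2 a b) 0 = readout (fold (stage L) [0..<L] (vec2 a b))"
proof -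
  obtain T Ts where T: "stage_layers L [0..<L] @ [readout_layer] = T # Ts"
    by (cases "stage_layers L [0..<L] @ [readout_layer]") auto
  have "realize 2 (T # Ts) (vec2 a b) = realize 4 (T # Ts) (vec2 a b)"
    using affine_vec2[of 4] by (cases Ts) simp_all
  then show ?thesis
    using realize_stage_layers[of L "[0..<L]" "vec2 a b"]
    by (simp add: bit_network_def T affine_readout_layer)
qed

lemma bit_network_in_NN: "realize 2 (bit_network L) \<in> NN 2 1 8 (2 * L)"
  unfolding NN_def
proof (intro CollectI exI conjI)
  show "length (bit_network L) \<le> 2 * L + 1"
    by (simp add: bit_network_def stage_layers_def length_concat sum_list_triv o_def)
  show "\<forall>T\<in>set (butlast (bit_network L)). fst T \<le> 8"
    by (auto simp: bit_network_def stage_layers_def)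
qed (simp_all add: bit_network_def)

theorem lemma29:
  fixes L :: nat
  shows "\<exists>\<phi>\<in>NN 2 1 8 (2 * L).
    (\<forall>(xs :: nat \<Rightarrow> real) (l :: nat).
       (\<forall>j\<in>{1..L}. xs j \<in> {0, 1}) \<longrightarrow> l \<in> {1..L} \<longrightarrow>
       \<phi> (vec2 (\<Sum>j=1..L. xs j * (1/2) ^ j) (real l)) 0 = xs l)
  \<and> (\<forall>x x' l l' :: real.
       \<bar>\<phi> (vec2 x l) 0 - \<phi> (vec2 x' l') 0\<bar>
         \<le> 2 * 2 ^ (L ^ 2) * \<bar>x - x'\<bar> + real L * \<bar>l - l'\<bar>)"
proof (intro bexI[OF _ bit_network_in_NN] conjI allI impI)
  fix xs :: "nat \<Rightarrow> real" and l :: nat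
  assume bits: "\<forall>j\<in>{1..L}. xs j \<in> {0, 1}" and l: "l \<in> {1..L}"
  have "(\<Sum>j=1..L. xs j * (1/2) ^ j) = binary_tail xs L 0"
    by (simp add: binary_tail_def)
  with stages_extract_digits[OF bits l order_refl] l
  show "realize 2 (bit_network L) (vec2 (\<Sum>j=1..L. xs j * (1/2) ^ j) (real l)) 0 = xs l"
    by (simp add: realize_bit_network)
next
  fix x x' l l' :: real
  have "(\<Sum>i = 1..L. ((2::real)^L)^i) * \<bar>x - x'\<bar> \<le> 2 * 2^(L^2) * \<bar>x - x'\<bar>"
    by (intro mult_right_mono sum_power_two_power_le) simp
  with stages_lipschitz[of L L "vec2 x l" "vec2 x' l'"]
  show "\<bar>realize 2 (bit_network L) (vec2 x l) 0 - realize 2 (bit_network L) (vec2 x' l') 0\<bar>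
      \<le> 2 * 2 ^ (L ^ 2) * \<bar>x - x'\<bar> + real L * \<bar>l - l'\<bar>"
    unfolding realize_bit_network by simp
qed

end
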